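(* Let $d\ge1$ and $T<\infty$. For any $t\ge0$, the random vector $X_1(t)-X_2(t)$ has a density bounded uniformly by $\Gamma$. Moreover, the density $\mathsf p(t,x,v)$ of $X_1(t)$ satisfies, for every $t\in[0,T]$ and $x,v\in\mathbb R^d$, $$\mathsf p(t,x,v)\le Ce^{-|v|/C}\mathbf 1_{\{|v|\ge C\}}+\Gamma\mathbf 1_{\{|v|<C\}}$$ for some finite constant $C=C(R,\Gamma,T,d)$.
   Context: Fix $d\ge1$. Let $f_0:\mathbb R^{2d}\to[0,\infty)$ be a probability density with $\|f_0\|_{L^\infty}\le\Gamma<\infty$ and support contained in the closed Euclidean ball of radius $R<\infty$ centred at the origin of $\mathbb R^{2d}$. Let $(B_i)_{i\ge1}$ be independent standard Brownian motions in $\mathbb R^d$ and $(x_i(0),v_i(0))_{i\ge1}$ i.i.d. with density $f_0$, independent of the $B_i$. Define the independent (non-interacting) particles $X_i(t)=(x_i(t),v_i(t))=\big(x_i(0)+v_i(0)t+\int_0^tB_i(s)ds,\;v_i(0)+B_i(t)\big)$, $t\ge0$. *)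

theory Defs
  imports "HOL-Probability.Probability"
begin

definition gauss_density :: "real \<Rightarrow> real^'d \<Rightarrow> real" where
  "gauss_density s x = (\<Prod>i\<in>UNIV. normal_density 0 (sqrt s) (x $ i))"

text \<open>Standard Brownian motion in real^'d on the probability space M
  (time parameter restricted to [0,oo); values at negative times are irrelevant):
  starts at 0, continuous paths, independent increments over any finite increasing
  sequence of times, Gaussian increments with covariance (t - s) I.\<close>
definition std_BM :: "'a measure \<Rightarrow> ('a \<Rightarrow> real \<Rightarrow> real^'d) \<Rightarrow> bool" where
  "std_BM M B \<longleftrightarrow>
     (\<forall>t\<ge>0. (\<lambda>\<omega>. B \<omega> t) \<in> borel_measurable M) \<and>
     (\<forall>\<omega>\<in>space M. B \<omega> 0 = 0) \<and>
     (\<forall>\<omega>\<in>space M. continuous_on {0..} (B \<omega>)) \<and>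
     (\<forall>s t. 0 \<le> s \<longrightarrow> s < t \<longrightarrow>
        distributed M lborel (\<lambda>\<omega>. B \<omega> t - B \<omega> s)
          (\<lambda>x. ennreal (gauss_density (t - s) x))) \<and>
     (\<forall>(n::nat) (ts::nat \<Rightarrow> real). 0 \<le> ts 0 \<longrightarrow> (\<forall>k<n. ts k < ts (Suc k)) \<longrightarrow>
        prob_space.indep_vars M (\<lambda>_. borel) (\<lambda>k \<omega>. B \<omega> (ts (Suc k)) - B \<omega> (ts k)) {..<n})"

definition particle ::
  "('a \<Rightarrow> (real^'d) \<times> (real^'d)) \<Rightarrow> ('a \<Rightarrow> real \<Rightarrow> real^'d) \<Rightarrow> real \<Rightarrow> 'a \<Rightarrow> (real^'d) \<times> (real^'d)" where
  "particle Z B t \<omega> =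
     (fst (Z \<omega>) + t *\<^sub>R snd (Z \<omega>) + integral {0..t} (B \<omega>), snd (Z \<omega>) + B \<omega> t)"

definition admissible_f0 :: "real \<Rightarrow> real \<Rightarrow> ((real^'d) \<times> (real^'d) \<Rightarrow> real) \<Rightarrow> bool" where
  "admissible_f0 R \<Gamma> f0 \<longleftrightarrow>
     f0 \<in> borel_measurable lborel \<and> (\<forall>z. 0 \<le> f0 z) \<and>
     (\<integral>\<^sup>+ z. ennreal (f0 z) \<partial>lborel) = 1 \<and>
     (\<forall>z. f0 z \<le> \<Gamma>) \<and> (\<forall>z. norm z > R \<longrightarrow> f0 z = 0)"

definition particle_system ::
  "'a measure \<Rightarrow> real \<Rightarrow> real \<Rightarrow> ((real^'d) \<times> (real^'d) \<Rightarrow> real) \<Rightarrow>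
   (nat \<Rightarrow> 'a \<Rightarrow> (real^'d) \<times> (real^'d)) \<Rightarrow> (nat \<Rightarrow> 'a \<Rightarrow> real \<Rightarrow> real^'d) \<Rightarrow> bool" where
  "particle_system M R \<Gamma> f0 Z B \<longleftrightarrow>
     prob_space M \<and> admissible_f0 R \<Gamma> f0 \<and>
     (\<forall>i\<ge>1. std_BM M (B i)) \<and>
     (\<forall>i\<ge>1. distributed M lborel (Z i) (\<lambda>z. ennreal (f0 z))) \<and>
     (\<forall>i\<ge>1. prob_space.indep_set M (sets (vimage_algebra (space M) (Z i) borel))
                (sets (vimage_algebra (space M) (B i) (PiM UNIV (\<lambda>_::real. borel))))) \<and>
     prob_space.indep_vars M (\<lambda>_. borel \<Otimes>\<^sub>M PiM UNIV (\<lambda>_::real. borel))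
        (\<lambda>i \<omega>. (Z i \<omega>, B i \<omega>)) {1..}"

end

theory Submission
  imports Defs
begin

(* X(t) = S_t Z + W with the shear S_t (x, v) = (x + t v, v), which preserves Lebesgue measure,
   and W = (int_0^t B, B t), which is independent of Z. Hence X(t) has the density
   z |-> E f0 (S_t^-1 (z - W)), an average of translates of a function bounded by Gamma.
   Since f0 vanishes outside the ball of radius R, its value at (x, v) is at most
   Gamma P(|v - B t| <= R), and for large |v| this is a Gaussian tail exp (-(|v| - R)^2 / (4 T))
   times the volume of the ball. The same averaging bound applies to X_1(t) - X_2(t), the sum
   of X_1(t) and the independent vector -X_2(t). *)

section \<open>Riemann sums\<close>

lemma integral_uniform_partition:
  fixes f :: "real \<Rightarrow> 'a::banach"
  assumes f: "continuous_on {0..t} f" and t: "0 \<le> t" and "m \<le> n"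
  shows "integral {0..real m * t / real n} f
           = (\<Sum>k<m. integral {real k * t / real n..real (Suc k) * t / real n} f)"
  using \<open>m \<le> n\<close>
proof (induction m)
  case (Suc m)
  have "real (Suc m) * t \<le> real n * t"
    using Suc.prems t by (intro mult_right_mono) auto
  then have le: "real m * t / real n \<le> real (Suc m) * t / real n" "real (Suc m) * t / real n \<le> t"
    using Suc.prems t by (auto simp: divide_right_mono mult_right_mono field_simps)
  have "f integrable_on {0..real (Suc m) * t / real n}"
    by (intro integrable_continuous_interval continuous_on_subset[OF f]) (use le in auto)
  then have "integral {0..real m * t / real n} f + integral {real m * t / real n..real (Suc m) * t / real n} f
      = integral {0..real (Suc m) * t / real n} f"
    using t le(1) by (intro Henstock_Kurzweil_Integration.integral_combine) auto
  then show ?case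
    using Suc by simp
qed simp

lemma norm_integral_sub_left_endpoint_le:
  fixes f :: "real \<Rightarrow> 'a::banach"
  assumes f: "f integrable_on {a..b}" and "a \<le> b" and "0 \<le> e"
    and e: "\<And>x. x \<in> {a..b} \<Longrightarrow> norm (f x - f a) \<le> e"
  shows "norm (integral {a..b} f - (b - a) *\<^sub>R f a) \<le> (b - a) * e"
proof -
  have "((\<lambda>x. f x - f a) has_integral integral {a..b} f - (b - a) *\<^sub>R f a) {a..b}"
    using has_integral_diff[OF integrable_integral[OF f] has_integral_const_real[of "f a" a b]]
      \<open>a \<le> b\<close> by simp
  from has_integral_bound_real[OF \<open>0 \<le> e\<close> finite.emptyI this] e \<open>a \<le> b\<close> show ?thesis
    by (simp add: mult.commute)
qed

lemma riemann_sum_tendsto_integral: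
  fixes f :: "real \<Rightarrow> 'a::banach"
  assumes f: "continuous_on {0..t} f" and t: "0 \<le> t"
  shows "(\<lambda>n. \<Sum>k<n. (t / real n) *\<^sub>R f (real k * t / real n)) \<longlonglongrightarrow> integral {0..t} f"
proof (rule LIMSEQ_I)
  fix r :: real assume "0 < r"
  define e where "e = r / (t + 1)"
  have e: "0 < e" "t * e < r"
    using \<open>0 < r\<close> t by (auto simp: e_def field_simps)
  obtain d where "0 < d" and d: "\<And>x y. x \<in> {0..t} \<Longrightarrow> y \<in> {0..t} \<Longrightarrow> dist y x < d \<Longrightarrow> dist (f y) (f x) < e"
    using compact_uniformly_continuous[OF f compact_Icc] e(1) unfolding uniformly_continuous_on_def by metis
  obtain N :: nat where N: "t / d < real N"
    using reals_Archimedean2 by blast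
  show "\<exists>N. \<forall>n\<ge>N. norm ((\<Sum>k<n. (t / real n) *\<^sub>R f (real k * t / real n)) - integral {0..t} f) < r"
  proof (intro exI allI impI)
    fix n assume n: "max N 1 \<le> n"
    define a where "a k = real k * t / real n" for k
    have mesh: "a (Suc k) - a k = t / real n" for k
      by (simp add: a_def diff_divide_distrib[symmetric] algebra_simps)
    have "t < d * real N"
      using N \<open>0 < d\<close> by (simp add: field_simps)
    also have "\<dots> \<le> d * real n"
      using n \<open>0 < d\<close> by simp
    finally have "t / real n < d"
      using n by (simp add: field_simps)
    have piece: "norm (integral {a k..a (Suc k)} f - (t / real n) *\<^sub>R f (a k)) \<le> t / real n * e"
      if "k < n" for k
    proof -
      have mono: "a k \<le> a (Suc k)"
        using t by (simp add: a_def divide_right_mono mult_right_mono)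
      have "real (Suc k) * t \<le> real n * t"
        using that t by (intro mult_right_mono) auto
      then have sub: "{a k..a (Suc k)} \<subseteq> {0..t}"
        using t n by (auto simp: a_def field_simps)
      have "norm (f x - f (a k)) \<le> e" if "x \<in> {a k..a (Suc k)}" for x
        using d[of "a k" x] sub that mesh[of k] \<open>t / real n < d\<close> mono
        by (force simp: dist_norm dist_real_def)
      then show ?thesis
        using norm_integral_sub_left_endpoint_le[of f "a k" "a (Suc k)" e] mono mesh[of k] e(1)
          integrable_continuous_interval[OF continuous_on_subset[OF f sub]] by simp
    qed
    have "integral {0..t} f = (\<Sum>k<n. integral {a k..a (Suc k)} f)"
      using integral_uniform_partition[OF f t order_refl, of n] n by (simp add: a_def)
    then have "norm ((\<Sum>k<n. (t / real n) *\<^sub>R f (real k * t / real n)) - integral {0..t} f)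
        = norm (\<Sum>k<n. integral {a k..a (Suc k)} f - (t / real n) *\<^sub>R f (a k))"
      by (simp add: a_def sum_subtractf norm_minus_commute)
    also have "\<dots> \<le> (\<Sum>k<n. t / real n * e)"
      by (rule order_trans[OF norm_sum sum_mono]) (use piece in auto)
    also have "\<dots> = t * e"
      using n by simp
    finally show "norm ((\<Sum>k<n. (t / real n) *\<^sub>R f (real k * t / real n)) - integral {0..t} f) < r"
      using e(2) by linarith
  qed
qed

(* integral {0..t} b need not be measurable in b for the product sigma algebra on paths; this
   limit is, and it agrees with the integral on continuous paths. *)
definition riemann_limit :: "real \<Rightarrow> (real \<Rightarrow> 'a::real_normed_vector) \<Rightarrow> 'a" where
  "riemann_limit t b = lim (\<lambda>n. \<Sum>k<n. (t / real n) *\<^sub>R b (real k * t / real n))"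

lemma riemann_limit_measurable [measurable]:
  "riemann_limit t \<in> borel_measurable (PiM UNIV (\<lambda>_::real. borel :: 'a::euclidean_space measure))"
  unfolding riemann_limit_def by measurable

lemma riemann_limit_eq_integral:
  fixes b :: "real \<Rightarrow> 'a::banach"
  shows "continuous_on {0..t} b \<Longrightarrow> 0 \<le> t \<Longrightarrow> riemann_limit t b = integral {0..t} b"
  unfolding riemann_limit_def by (rule limI) (rule riemann_sum_tendsto_integral)

section \<open>Shears of phase space\<close>

lemma nn_integral_lborel_translate:
  fixes g :: "'a::euclidean_space \<Rightarrow> ennreal"
  assumes [measurable]: "g \<in> borel_measurable borel"
  shows "(\<integral>\<^sup>+x. g (x + w) \<partial>lborel) = (\<integral>\<^sup>+x. g x \<partial>lborel)"
proof -
  have "(\<integral>\<^sup>+x. g x \<partial>lborel) = (\<integral>\<^sup>+x. g x \<partial>distr lborel borel ((+) w))"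
    by (simp add: lborel_distr_plus)
  also have "\<dots> = (\<integral>\<^sup>+x. g (x + w) \<partial>lborel)"
    by (subst nn_integral_distr) (auto simp: add.commute)
  finally show ?thesis ..
qed

definition shear :: "real \<Rightarrow> 'a::real_vector \<times> 'a \<Rightarrow> 'a \<times> 'a" where
  "shear t p = (fst p + t *\<^sub>R snd p, snd p)"

lemma shear_shear [simp]: "shear s (shear t p) = shear (s + t) p"
  by (simp add: shear_def scaleR_add_left)

lemma shear_0 [simp]: "shear 0 p = p"
  by (simp add: shear_def)

lemma snd_shear [simp]: "snd (shear t p) = snd p"
  by (simp add: shear_def)

lemma shear_measurable [measurable]:
  "shear t \<in> borel_measurable (borel :: ('a::real_normed_vector \<times> 'a) measure)"
  unfolding shear_def by (intro borel_measurable_continuous_onI continuous_intros)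

lemma distr_shear_lborel:
  "distr lborel borel (shear t) = (lborel :: ('a::euclidean_space \<times> 'a) measure)"
proof (rule measure_eqI)
  fix A :: "('a \<times> 'a) set" assume "A \<in> sets (distr lborel borel (shear t))"
  then have [measurable]: "A \<in> sets borel" by simp
  have "emeasure (distr lborel borel (shear t)) A = (\<integral>\<^sup>+p. indicator A (shear t p) \<partial>(lborel \<Otimes>\<^sub>M lborel))"
    by (subst nn_integral_indicator[symmetric]) (auto simp: nn_integral_distr lborel_prod simp del: nn_integral_indicator)
  also have "\<dots> = (\<integral>\<^sup>+v. \<integral>\<^sup>+x. indicator A (x + t *\<^sub>R v, v) \<partial>lborel \<partial>lborel)"
    by (subst lborel_pair.nn_integral_snd[symmetric]) (auto simp: shear_def)
  also have "\<dots> = (\<integral>\<^sup>+v. \<integral>\<^sup>+x. indicator A (x, v) \<partial>lborel \<partial>lborel)"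
    by (subst nn_integral_lborel_translate) auto
  also have "\<dots> = (\<integral>\<^sup>+p. indicator A p \<partial>(lborel \<Otimes>\<^sub>M lborel))"
    by (subst lborel_pair.nn_integral_snd[symmetric]) (auto simp: lborel_prod)
  also have "\<dots> = emeasure lborel A"
    by (simp add: lborel_prod)
  finally show "emeasure (distr lborel borel (shear t)) A = emeasure lborel A" .
qed simp

lemma distributed_shear:
  assumes "distributed M lborel X f"
  shows "distributed M lborel (\<lambda>\<omega>. shear t (X \<omega>)) (\<lambda>z. f (shear (- t) z))"
proof -
  have [measurable]: "X \<in> borel_measurable M" "f \<in> borel_measurable borel"
    using distributed_measurable[OF assms] distributed_borel_measurable[OF assms] by simp_all
  have "distr M lborel (\<lambda>\<omega>. shear t (X \<omega>)) = distr (distr M lborel X) lborel (shear t)"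
    by (subst distr_distr) (auto simp: comp_def)
  also have "\<dots> = distr (density (distr lborel borel (shear (- t))) f) lborel (shear t)"
    by (simp add: distributed_distr_eq_density[OF assms] distr_shear_lborel)
  also have "\<dots> = density lborel (\<lambda>z. f (shear (- t) z))"
    by (subst distr_density_distr) (auto simp: comp_def)
  finally show ?thesis
    by (auto simp: distributed_def)
qed

section \<open>Densities of independent sums\<close>

lemma distributed_cong_space:
  assumes "distributed M N X f" and "\<And>\<omega>. \<omega> \<in> space M \<Longrightarrow> X \<omega> = Y \<omega>"
  shows "distributed M N Y f"
proof -
  have "Y \<in> measurable M N \<longleftrightarrow> X \<in> measurable M N" "distr M N Y = distr M N X"
    using assms(2) by (auto intro!: measurable_cong distr_cong)
  then show ?thesis
    using assms(1) by (simp add: distributed_def)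
qed

lemma distributed_enn2real:
  assumes "distributed M N X h" and "\<And>z. h z \<noteq> \<infinity>"
  shows "distributed M N X (\<lambda>z. ennreal (enn2real (h z)))"
  using assms by (simp add: ennreal_enn2real_if)

lemma vimage_generator_compose_subset:
  assumes "X \<in> measurable M N" and "f \<in> measurable N L"
  shows "{(\<lambda>\<omega>. f (X \<omega>)) -` A \<inter> space M | A. A \<in> sets L} \<subseteq> {X -` A \<inter> space M | A. A \<in> sets N}"
proof safe
  fix A assume "A \<in> sets L"
  then have "f -` A \<inter> space N \<in> sets N" and "(\<lambda>\<omega>. f (X \<omega>)) -` A \<inter> space M = X -` (f -` A \<inter> space N) \<inter> space M"
    using assms measurable_space[OF assms(1)] by auto
  then show "\<exists>A'. (\<lambda>\<omega>. f (X \<omega>)) -` A \<inter> space M = X -` A' \<inter> space M \<and> A' \<in> sets N"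
    by blast
qed

lemma (in prob_space) indep_var_compose_vimage_algebra:
  assumes indep: "indep_set (sets (vimage_algebra (space M) X N)) (sets (vimage_algebra (space M) Y K))"
    and X: "X \<in> measurable M N" and Y: "Y \<in> measurable M K"
    and f: "f \<in> measurable N L" and g: "g \<in> measurable K L"
  shows "indep_var L (\<lambda>\<omega>. f (X \<omega>)) L (\<lambda>\<omega>. g (Y \<omega>))"
  unfolding indep_var_eq
proof (intro conjI)
  show "random_variable L (\<lambda>\<omega>. f (X \<omega>))" "random_variable L (\<lambda>\<omega>. g (Y \<omega>))"
    using X Y f g by auto
  show "indep_set (sigma_sets (space M) {(\<lambda>\<omega>. f (X \<omega>)) -` A \<inter> space M | A. A \<in> sets L})
                  (sigma_sets (space M) {(\<lambda>\<omega>. g (Y \<omega>)) -` A \<inter> space M | A. A \<in> sets L})"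
    using indep unfolding indep_set_def sets_vimage_algebra
    by (rule indep_sets_mono_sets)
       (simp split: bool.split add: sigma_sets_subseteq vimage_generator_compose_subset X Y f g)
qed

lemma (in prob_space) indep_vars_indep_var:
  assumes "indep_vars M' X I" and "i \<in> I" "j \<in> I" "i \<noteq> j"
  shows "indep_var (M' i) (X i) (M' j) (X j)"
proof -
  have "indep_var (M' i) ((\<lambda>f. f i) \<circ> (\<lambda>\<omega>. restrict (\<lambda>k. X k \<omega>) {i}))
                  (M' j) ((\<lambda>f. f j) \<circ> (\<lambda>\<omega>. restrict (\<lambda>k. X k \<omega>) {j}))"
    using assms by (intro indep_var_compose[OF indep_var_restrict[OF assms(1)]] measurable_component_singleton) auto
  then show ?thesis
    by (simp add: comp_def)
qed

lemma (in prob_space) distributed_add_indep: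
  fixes U W :: "'a \<Rightarrow> 'b::euclidean_space"
  assumes U: "distributed M lborel U f" and [measurable]: "random_variable borel W"
    and indep: "indep_var borel U borel W"
  shows "distributed M lborel (\<lambda>\<omega>. U \<omega> + W \<omega>) (\<lambda>z. \<integral>\<^sup>+w. f (z - w) \<partial>distr M borel W)"
proof -
  define P where "P = distr M borel W"
  have [measurable]: "f \<in> borel_measurable borel" "random_variable borel U"
    using distributed_borel_measurable[OF U] distributed_measurable[OF U] by simp_all
  interpret P: prob_space P
    unfolding P_def by (rule prob_space_distr) simp
  have [measurable_cong]: "sets P = sets borel"
    by (simp add: P_def)
  interpret LP: pair_sigma_finite lborel P ..
  have dU: "distr M borel U = density lborel f"
    using distributed_distr_eq_density[OF U] by (metis distr_cong sets_lborel)
  interpret D: prob_space "density lborel f"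
    using dU[symmetric] by (metis prob_space_distr \<open>random_variable borel U\<close>)
  interpret DP: pair_sigma_finite "density lborel f" P ..
  have "distr M lborel (\<lambda>\<omega>. U \<omega> + W \<omega>) = density lborel (\<lambda>z. \<integral>\<^sup>+w. f (z - w) \<partial>P)"
  proof (rule measure_eqI)
    fix A assume "A \<in> sets (distr M lborel (\<lambda>\<omega>. U \<omega> + W \<omega>))"
    then have [measurable]: "A \<in> sets borel" by simp
    have "emeasure (distr M lborel (\<lambda>\<omega>. U \<omega> + W \<omega>)) A = (\<integral>\<^sup>+\<omega>. indicator A (U \<omega> + W \<omega>) \<partial>M)"
      by (subst emeasure_distr) (auto simp flip: nn_integral_indicator intro!: nn_integral_cong split: split_indicator)
    also have "\<dots> = (\<integral>\<^sup>+p. indicator A (fst p + snd p) \<partial>distr M (borel \<Otimes>\<^sub>M borel) (\<lambda>\<omega>. (U \<omega>, W \<omega>)))"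
      by (subst nn_integral_distr) auto
    also have "\<dots> = (\<integral>\<^sup>+p. indicator A (fst p + snd p) \<partial>(density lborel f \<Otimes>\<^sub>M P))"
      using indep unfolding indep_var_distribution_eq P_def dU by simp
    also have "\<dots> = (\<integral>\<^sup>+w. \<integral>\<^sup>+x. f x * indicator A (x + w) \<partial>lborel \<partial>P)"
      by (subst DP.nn_integral_snd[symmetric]) (auto simp: nn_integral_density)
    also have "\<dots> = (\<integral>\<^sup>+w. \<integral>\<^sup>+z. f (z - w) * indicator A z \<partial>lborel \<partial>P)"
    proof -
      have "(\<integral>\<^sup>+x. f x * indicator A (x + w) \<partial>lborel) = (\<integral>\<^sup>+z. f (z - w) * indicator A z \<partial>lborel)" for w
        using nn_integral_lborel_translate[of "\<lambda>z. f (z - w) * indicator A z" w] by simp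
      then show ?thesis by simp
    qed
    also have "\<dots> = (\<integral>\<^sup>+z. (\<integral>\<^sup>+w. f (z - w) \<partial>P) * indicator A z \<partial>lborel)"
      using LP.Fubini'[of "\<lambda>z w. f (z - w) * indicator A z"] by (simp add: nn_integral_multc)
    also have "\<dots> = emeasure (density lborel (\<lambda>z. \<integral>\<^sup>+w. f (z - w) \<partial>P)) A"
      by (simp add: emeasure_density)
    finally show "emeasure (distr M lborel (\<lambda>\<omega>. U \<omega> + W \<omega>)) A
        = emeasure (density lborel (\<lambda>z. \<integral>\<^sup>+w. f (z - w) \<partial>P)) A" .
  qed simp
  moreover have "(\<lambda>z. \<integral>\<^sup>+w. f (z - w) \<partial>P) \<in> borel_measurable borel"
    by measurable
  ultimately show ?thesis
    unfolding distributed_def P_def[symmetric] by simp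
qed

lemma (in prob_space) distributed_add_indep_le:
  fixes U W :: "'a \<Rightarrow> 'b::euclidean_space"
  assumes "distributed M lborel U f" and "\<And>z. f z \<le> c"
    and "random_variable borel W" and "indep_var borel U borel W"
  shows "\<exists>h. distributed M lborel (\<lambda>\<omega>. U \<omega> + W \<omega>) h \<and> (\<forall>z. h z \<le> c)"
proof (intro exI conjI allI)
  interpret P: prob_space "distr M borel W"
    using assms(3) by (rule prob_space_distr)
  show "distributed M lborel (\<lambda>\<omega>. U \<omega> + W \<omega>) (\<lambda>z. \<integral>\<^sup>+w. f (z - w) \<partial>distr M borel W)"
    using assms(1,3,4) by (rule distributed_add_indep)
  fix z
  have "(\<integral>\<^sup>+w. f (z - w) \<partial>distr M borel W) \<le> (\<integral>\<^sup>+w. c \<partial>distr M borel W)"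
    using assms(2) by (intro nn_integral_mono) simp
  then show "(\<integral>\<^sup>+w. f (z - w) \<partial>distr M borel W) \<le> c"
    using P.emeasure_space_1 by simp
qed

lemma nn_integral_shifted_density_le:
  fixes f :: "'a::real_normed_vector \<times> 'a \<Rightarrow> real"
  assumes "sets P = sets borel" and "\<And>z. f z \<le> \<Gamma>" and "\<And>z. R < norm (snd z) \<Longrightarrow> f z = 0"
  shows "(\<integral>\<^sup>+w. ennreal (f (z - w)) \<partial>P) \<le> ennreal \<Gamma> * emeasure P {w. norm (snd z - snd w) \<le> R}"
proof -
  have [measurable]: "{w::'a \<times> 'a. norm (snd z - snd w) \<le> R} \<in> sets P"
    using assms(1) by (simp add: borel_closed closed_Collect_le continuous_intros)
  have "(\<integral>\<^sup>+w. ennreal (f (z - w)) \<partial>P) \<le> (\<integral>\<^sup>+w. ennreal \<Gamma> * indicator {w. norm (snd z - snd w) \<le> R} w \<partial>P)"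
    using assms(2,3)[of "z - _"] by (intro nn_integral_mono) (auto simp: ennreal_leI split: split_indicator)
  also have "\<dots> = ennreal \<Gamma> * emeasure P {w. norm (snd z - snd w) \<le> R}"
    by (simp add: nn_integral_cmult_indicator)
  finally show ?thesis .
qed

section \<open>The density of a free kinetic Brownian particle\<close>

definition particle_map ::
  "real \<Rightarrow> ('a::real_normed_vector \<times> 'a) \<times> (real \<Rightarrow> 'a) \<Rightarrow> 'a \<times> 'a" where
  "particle_map t p = shear t (fst p) + (riemann_limit t (snd p), snd p t)"

lemma particle_map_measurable [measurable]:
  "particle_map t \<in> borel_measurable (borel \<Otimes>\<^sub>M PiM UNIV (\<lambda>_::real. borel :: 'a::euclidean_space measure))"
  unfolding particle_map_def by measurable

lemma particle_eq_particle_map: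
  assumes "continuous_on {0..t} (B \<omega>)" and "0 \<le> t"
  shows "particle Z B t \<omega> = particle_map t (Z \<omega>, B \<omega>)"
  using assms by (simp add: particle_def particle_map_def shear_def riemann_limit_eq_integral algebra_simps)

lemma std_BM_continuous_on:
  "std_BM M B \<Longrightarrow> \<omega> \<in> space M \<Longrightarrow> continuous_on {0..t} (B \<omega>)"
  unfolding std_BM_def by (auto intro: continuous_on_subset)

lemma (in prob_space) particle_density_le:
  fixes Z :: "'a \<Rightarrow> (real^'d) \<times> (real^'d)" and B :: "'a \<Rightarrow> real \<Rightarrow> real^'d"
  assumes Z: "distributed M lborel Z (\<lambda>z. ennreal (f0 z))"
    and f0_le: "\<And>z. f0 z \<le> \<Gamma>" and f0_supp: "\<And>z. R < norm z \<Longrightarrow> f0 z = 0"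
    and Z_meas: "Z \<in> borel_measurable M" and B_meas: "B \<in> measurable M (PiM UNIV (\<lambda>_. borel))"
    and indep: "indep_set (sets (vimage_algebra (space M) Z borel))
                          (sets (vimage_algebra (space M) B (PiM UNIV (\<lambda>_. borel))))"
    and cont: "\<And>\<omega>. \<omega> \<in> space M \<Longrightarrow> continuous_on {0..t} (B \<omega>)" and "0 \<le> t"
  shows "\<exists>h. distributed M lborel (particle Z B t) h \<and> (\<forall>z. h z \<le> ennreal \<Gamma>) \<and>
     (\<forall>x v. h (x, v) \<le> ennreal \<Gamma> * emeasure M {\<omega>\<in>space M. norm (v - B \<omega> t) \<le> R})"
proof -
  define G where "G b = (riemann_limit t b, b t)" for b :: "real \<Rightarrow> real^'d"
  have [measurable]: "G \<in> borel_measurable (PiM UNIV (\<lambda>_. borel))"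
    unfolding G_def by measurable
  note [measurable] = Z_meas B_meas
  define P where "P = distr M borel (\<lambda>\<omega>. G (B \<omega>))"
  define h where "h z = (\<integral>\<^sup>+w. ennreal (f0 (shear (- t) (z - w))) \<partial>P)" for z
  have "indep_var borel (\<lambda>\<omega>. shear t (Z \<omega>)) borel (\<lambda>\<omega>. G (B \<omega>))"
    by (rule indep_var_compose_vimage_algebra[OF indep]) measurable
  then have "distributed M lborel (\<lambda>\<omega>. shear t (Z \<omega>) + G (B \<omega>)) h"
    unfolding h_def P_def by (intro distributed_add_indep distributed_shear[OF Z]) auto
  then have "distributed M lborel (particle Z B t) h"
    by (rule distributed_cong_space) (simp add: particle_eq_particle_map cont \<open>0 \<le> t\<close> particle_map_def G_def)
  moreover have tail: "h (x, v) \<le> ennreal \<Gamma> * emeasure M {\<omega>\<in>space M. norm (v - B \<omega> t) \<le> R}" for x v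
  proof -
    have [measurable]: "{w :: (real^'d) \<times> (real^'d). norm (v - snd w) \<le> R} \<in> sets borel"
      by (intro borel_closed closed_Collect_le continuous_intros)
    have "f0 (shear (- t) z) = 0" if "R < norm (snd z)" for z
      using that f0_supp by (metis norm_snd_le prod.collapse snd_shear order_less_le_trans)
    then have "h (x, v) \<le> ennreal \<Gamma> * emeasure P {w. norm (v - snd w) \<le> R}"
      unfolding h_def using f0_le
      by (intro nn_integral_shifted_density_le[where z="(x, v)", simplified]) (auto simp: P_def)
    also have "emeasure P {w. norm (v - snd w) \<le> R} = emeasure M {\<omega>\<in>space M. norm (v - B \<omega> t) \<le> R}"
      unfolding P_def by (subst emeasure_distr) (auto simp: G_def intro!: arg_cong[where f="emeasure M"])
    finally show ?thesis .
  qed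
  moreover have "h z \<le> ennreal \<Gamma>" for z
    using tail[of "fst z" "snd z"] order_trans[OF _ mult_left_le[OF emeasure_le_1]] by simp
  ultimately show ?thesis
    by blast
qed

section \<open>Gaussian tails\<close>

lemma gauss_density_eq_exp_norm:
  fixes x :: "real^'d"
  assumes "0 < t"
  shows "gauss_density t x = (1 / sqrt (2 * pi * t)) ^ CARD('d) * exp (- (norm x)\<^sup>2 / (2 * t))"
proof -
  have "(norm x)\<^sup>2 = (\<Sum>i\<in>UNIV. (x $ i)\<^sup>2)"
    unfolding norm_vec_def L2_set_def by (simp add: sum_nonneg)
  then have "- (norm x)\<^sup>2 / (2 * t) = (\<Sum>i\<in>UNIV. - (x $ i)\<^sup>2 / (2 * t))"
    by (simp add: sum_negf sum_divide_distrib)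
  then have "exp (- (norm x)\<^sup>2 / (2 * t)) = (\<Prod>i\<in>UNIV. exp (- (x $ i)\<^sup>2 / (2 * t)))"
    by (simp add: exp_sum)
  then show ?thesis
    using assms by (simp add: gauss_density_def normal_density_def prod_dividef prod_constant power_one_over)
qed

lemma exp_neg_le_sqrt_two_pi:
  fixes d s t T :: real
  assumes "0 < t" "t \<le> T" "0 < d" and big: "4 * d * (1 + T) \<le> s\<^sup>2"
  shows "exp (- s\<^sup>2 / (4 * d * t)) \<le> sqrt (2 * pi * t)"
proof -
  have "0 < 4 * d * (1 + T)"
    using assms by simp
  then have "0 < s\<^sup>2"
    using big by linarith
  define a where "a = s\<^sup>2 / (4 * d * t)"
  have "0 < a"
    using \<open>0 < s\<^sup>2\<close> assms by (simp add: a_def)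
  have "a \<le> exp a"
    using exp_ge_add_one_self[of a] by linarith
  then have "exp (- a) \<le> 1 / a"
    using \<open>0 < a\<close> by (simp add: exp_minus divide_simps)
  also have "\<dots> = 4 * d * t / s\<^sup>2"
    by (simp add: a_def)
  also have "\<dots> \<le> 4 * d * t / (4 * d * (1 + T))"
    using mult_pos_pos[OF \<open>0 < s\<^sup>2\<close> \<open>0 < 4 * d * (1 + T)\<close>] assms by (intro divide_left_mono[OF big]) auto
  also have "\<dots> = t / (1 + T)"
    using assms by simp
  also have "\<dots> \<le> sqrt t"
  proof -
    have "sqrt t \<le> 1 + t"
      by (rule real_le_lsqrt) (use \<open>0 < t\<close> in \<open>auto simp: power2_eq_square algebra_simps\<close>)
    then have "sqrt t * sqrt t \<le> sqrt t * (1 + T)"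
      using assms by (intro mult_left_mono) auto
    then show ?thesis
      using assms by (simp add: divide_le_eq)
  qed
  also have "\<dots> \<le> sqrt (2 * pi * t)"
    using assms pi_gt3 by (intro real_sqrt_le_mono) simp
  finally show ?thesis
    by (simp add: a_def)
qed

(* Half of the exponent |x|^2 / (2 t) absorbs the normalisation (2 pi t)^(-d/2), the other half
   is at most - s^2 / (4 T). *)
lemma gauss_density_le_exp:
  fixes x :: "real^'d"
  assumes t: "0 < t" "t \<le> T" and s: "0 \<le> s" "s \<le> norm x"
    and big: "4 * real CARD('d) * (1 + T) \<le> s\<^sup>2"
  shows "gauss_density t x \<le> exp (- s\<^sup>2 / (4 * T))"
proof -
  define d where "d = real CARD('d)"
  define q where "q = 1 / sqrt (2 * pi * t)"
  define e where "e = exp (- s\<^sup>2 / (4 * d * t))"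
  have "0 < q"
    using t by (simp add: q_def)
  have "q * e \<le> q * sqrt (2 * pi * t)"
    using exp_neg_le_sqrt_two_pi[OF t _ big] \<open>0 < q\<close> by (simp add: e_def d_def)
  then have "q * e \<le> 1"
    using t by (simp add: q_def)
  have "s\<^sup>2 / (2 * t) \<le> (norm x)\<^sup>2 / (2 * t)"
    using s t by (intro divide_right_mono power_mono) auto
  moreover have "s\<^sup>2 / (4 * T) \<le> s\<^sup>2 / (4 * t)"
    using t by (intro divide_left_mono) auto
  moreover have "d * (- s\<^sup>2 / (4 * d * t)) = - s\<^sup>2 / (4 * t)"
    by (simp add: d_def)
  ultimately have "- (norm x)\<^sup>2 / (2 * t) \<le> d * (- s\<^sup>2 / (4 * d * t)) + - s\<^sup>2 / (4 * T)"
    by (simp add: field_simps)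
  then have "exp (- (norm x)\<^sup>2 / (2 * t)) \<le> e ^ CARD('d) * exp (- s\<^sup>2 / (4 * T))"
    by (simp add: e_def d_def exp_add[symmetric] exp_of_nat_mult[symmetric])
  then have "gauss_density t x \<le> q ^ CARD('d) * (e ^ CARD('d) * exp (- s\<^sup>2 / (4 * T)))"
    using \<open>0 < q\<close> by (simp add: gauss_density_eq_exp_norm[OF t(1)] q_def)
  also have "\<dots> = (q * e) ^ CARD('d) * exp (- s\<^sup>2 / (4 * T))"
    by (simp add: power_mult_distrib)
  also have "\<dots> \<le> exp (- s\<^sup>2 / (4 * T))"
    using \<open>0 < q\<close> \<open>q * e \<le> 1\<close> by (intro mult_left_le_one_le power_le_one) (auto simp: e_def)
  finally show ?thesis .
qed

lemma std_BM_distributed: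
  assumes "std_BM M B" and "0 < t"
  shows "distributed M lborel (\<lambda>\<omega>. B \<omega> t) (\<lambda>x. ennreal (gauss_density t x))"
proof -
  have "distributed M lborel (\<lambda>\<omega>. B \<omega> t - B \<omega> 0) (\<lambda>x. ennreal (gauss_density (t - 0) x))"
    using assms unfolding std_BM_def by blast
  then have "distributed M lborel (\<lambda>\<omega>. B \<omega> t - B \<omega> 0) (\<lambda>x. ennreal (gauss_density t x))"
    by simp
  then show ?thesis
    by (rule distributed_cong_space) (use assms(1) in \<open>simp add: std_BM_def\<close>)
qed

lemma emeasure_cball_gaussian_le:
  fixes X :: "'a \<Rightarrow> real^'d"
  assumes X: "distributed M lborel X (\<lambda>x. ennreal (gauss_density t x))"
    and t: "0 < t" "t \<le> T" and "0 \<le> R" "R \<le> norm v"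
    and big: "4 * real CARD('d) * (1 + T) \<le> (norm v - R)\<^sup>2"
  shows "emeasure M {\<omega>\<in>space M. norm (v - X \<omega>) \<le> R}
     \<le> ennreal (exp (- (norm v - R)\<^sup>2 / (4 * T)) * (unit_ball_vol (real CARD('d)) * R ^ CARD('d)))"
proof -
  define K where "K = exp (- (norm v - R)\<^sup>2 / (4 * T))"
  have [measurable]: "X \<in> borel_measurable M" "(\<lambda>x::real^'d. ennreal (gauss_density t x)) \<in> borel_measurable borel"
    using distributed_measurable[OF X] distributed_borel_measurable[OF X] by simp_all
  have K_bound: "gauss_density t x \<le> K" if "x \<in> cball v R" for x
  proof -
    have "norm v - R \<le> norm x"
      using that norm_triangle_ineq[of x "v - x"] by (simp add: dist_norm)
    then show ?thesis
      unfolding K_def using \<open>R \<le> norm v\<close> by (intro gauss_density_le_exp[OF t _ _ big]) auto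
  qed
  have "{\<omega>\<in>space M. norm (v - X \<omega>) \<le> R} = X -` cball v R \<inter> space M"
    by (auto simp: dist_norm)
  then have "emeasure M {\<omega>\<in>space M. norm (v - X \<omega>) \<le> R} = emeasure (distr M lborel X) (cball v R)"
    by (simp add: emeasure_distr)
  also have "\<dots> = (\<integral>\<^sup>+x. ennreal (gauss_density t x) * indicator (cball v R) x \<partial>lborel)"
    by (simp add: distributed_distr_eq_density[OF X] emeasure_density)
  also have "\<dots> \<le> (\<integral>\<^sup>+x. ennreal K * indicator (cball v R) x \<partial>lborel)"
    using K_bound by (intro nn_integral_mono) (simp add: ennreal_leI split: split_indicator)
  also have "\<dots> = ennreal (K * (unit_ball_vol (real CARD('d)) * R ^ CARD('d)))"
    using \<open>0 \<le> R\<close> by (simp add: nn_integral_cmult_indicator emeasure_cball ennreal_mult K_def)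
  finally show ?thesis
    unfolding K_def .
qed

section \<open>Velocity tails of the particle system\<close>

(* The summands of the lower bound on C pay in turn for the prefactor Gamma V, for r - R >= r / 2,
   for comparing the exponents, and for the Gaussian normalisation. *)
lemma tail_constant_bounds:
  fixes \<Gamma> V R T d C r :: real
  assumes "0 \<le> \<Gamma>" "0 \<le> V" "0 \<le> R" "0 < T" "0 \<le> d"
    and C: "1 + \<Gamma> * V + 2 * R + 16 * T + 16 * d * (1 + T) \<le> C" and "C \<le> r"
  shows "R \<le> r" "4 * d * (1 + T) \<le> (r - R)\<^sup>2"
    "\<Gamma> * (exp (- (r - R)\<^sup>2 / (4 * T)) * V) \<le> C * exp (- r / C)"
proof -
  have "0 \<le> \<Gamma> * V" "0 \<le> d * (1 + T)"
    using assms by simp_all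
  then have C_ge: "1 \<le> C" "\<Gamma> * V \<le> C" "2 * R \<le> C" "16 * T \<le> C" "16 * d * (1 + T) \<le> C"
    using assms by linarith+
  have "0 < r" and half: "r / 2 \<le> r - R"
    using C_ge \<open>C \<le> r\<close> by linarith+
  then show "R \<le> r"
    by linarith
  have sq: "r\<^sup>2 / 4 \<le> (r - R)\<^sup>2"
    using power_mono[OF half, of 2] \<open>0 < r\<close> by (simp add: power_divide)
  have "C \<le> C * C"
    using C_ge by simp
  also have "\<dots> \<le> r * r"
    using C_ge \<open>C \<le> r\<close> by (intro mult_mono) auto
  finally have "C \<le> r\<^sup>2"
    by (simp add: power2_eq_square)
  then show "4 * d * (1 + T) \<le> (r - R)\<^sup>2"
    using sq C_ge by linarith
  have "C * C \<le> r * C"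
    using C_ge \<open>C \<le> r\<close> by (intro mult_right_mono) auto
  then have "16 * T \<le> r * C"
    using C_ge \<open>C \<le> C * C\<close> by linarith
  then have "r / C \<le> r\<^sup>2 / (16 * T)"
    using C_ge \<open>0 < r\<close> \<open>0 < T\<close> by (simp add: field_simps power2_eq_square)
  also have "\<dots> \<le> (r - R)\<^sup>2 / (4 * T)"
    using sq \<open>0 < T\<close> by (simp add: field_simps)
  finally have "exp (- (r - R)\<^sup>2 / (4 * T)) \<le> exp (- r / C)"
    by simp
  then have "(\<Gamma> * V) * exp (- (r - R)\<^sup>2 / (4 * T)) \<le> C * exp (- r / C)"
    using C_ge \<open>0 \<le> \<Gamma> * V\<close> by (intro mult_mono) auto
  then show "\<Gamma> * (exp (- (r - R)\<^sup>2 / (4 * T)) * V) \<le> C * exp (- r / C)"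
    by (simp add: ac_simps)
qed

lemma admissible_f0_nonneg:
  assumes "admissible_f0 R \<Gamma> f0"
  shows "0 \<le> \<Gamma>" "0 \<le> R"
proof -
  have f0: "\<And>z. 0 \<le> f0 z" "\<And>z. f0 z \<le> \<Gamma>" "\<And>z. R < norm z \<Longrightarrow> f0 z = 0"
    and "(\<integral>\<^sup>+z. ennreal (f0 z) \<partial>lborel) = 1"
    using assms unfolding admissible_f0_def by blast+
  show "0 \<le> \<Gamma>"
    using f0(1,2) order_trans by blast
  show "0 \<le> R"
  proof (rule ccontr)
    assume "\<not> 0 \<le> R"
    then have "f0 z = 0" for z
      using f0(3)[of z] norm_ge_zero[of z] by linarith
    then show False
      using \<open>(\<integral>\<^sup>+z. ennreal (f0 z) \<partial>lborel) = 1\<close> by simp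
  qed
qed

lemma particle_system_density:
  fixes Z :: "nat \<Rightarrow> 'a \<Rightarrow> (real^'d) \<times> (real^'d)"
  assumes ps: "particle_system M R \<Gamma> f0 Z B" and "0 \<le> t" "1 \<le> i"
  shows "\<exists>h. distributed M lborel (particle (Z i) (B i) t) h \<and> (\<forall>z. h z \<le> ennreal \<Gamma>) \<and>
     (\<forall>x v. h (x, v) \<le> ennreal \<Gamma> * emeasure M {\<omega>\<in>space M. norm (v - B i \<omega> t) \<le> R})"
proof -
  interpret prob_space M
    using ps by (simp add: particle_system_def)
  have "indep_vars (\<lambda>_. borel \<Otimes>\<^sub>M PiM UNIV (\<lambda>_::real. borel)) (\<lambda>i \<omega>. (Z i \<omega>, B i \<omega>)) {1..}"
    using ps by (simp add: particle_system_def)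
  then have ZB: "(\<lambda>\<omega>. (Z i \<omega>, B i \<omega>)) \<in> measurable M (borel \<Otimes>\<^sub>M PiM UNIV (\<lambda>_::real. borel))"
    using \<open>1 \<le> i\<close> unfolding indep_vars_def by auto
  have Zm: "Z i \<in> borel_measurable M" and Bm: "B i \<in> measurable M (PiM UNIV (\<lambda>_. borel))"
    using measurable_compose[OF ZB measurable_fst] measurable_compose[OF ZB measurable_snd] by simp_all
  have adm: "admissible_f0 R \<Gamma> f0" and dZ: "distributed M lborel (Z i) (\<lambda>z. ennreal (f0 z))"
    and bm: "std_BM M (B i)"
    and indep: "indep_set (sets (vimage_algebra (space M) (Z i) borel))
                          (sets (vimage_algebra (space M) (B i) (PiM UNIV (\<lambda>_. borel))))"
    using ps \<open>1 \<le> i\<close> by (auto simp: particle_system_def)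
  show ?thesis
    using adm \<open>0 \<le> t\<close>
    by (intro particle_density_le[OF dZ _ _ Zm Bm indep std_BM_continuous_on[OF bm]])
       (auto simp: admissible_f0_def)
qed

lemma particle_system_difference_density:
  fixes Z :: "nat \<Rightarrow> 'a \<Rightarrow> (real^'d) \<times> (real^'d)"
  assumes ps: "particle_system M R \<Gamma> f0 Z B" and "0 \<le> t"
  shows "\<exists>g. distributed M lborel (\<lambda>\<omega>. particle (Z 1) (B 1) t \<omega> - particle (Z 2) (B 2) t \<omega>)
               (\<lambda>z. ennreal (g z)) \<and> (\<forall>z. 0 \<le> g z \<and> g z \<le> \<Gamma>)"
proof -
  interpret prob_space M
    using ps by (simp add: particle_system_def)
  have "indep_vars (\<lambda>_. borel \<Otimes>\<^sub>M PiM UNIV (\<lambda>_::real. borel)) (\<lambda>i \<omega>. (Z i \<omega>, B i \<omega>)) {1..}"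
    using ps by (simp add: particle_system_def)
  then have "indep_var (borel \<Otimes>\<^sub>M PiM UNIV (\<lambda>_. borel)) (\<lambda>\<omega>. (Z 1 \<omega>, B 1 \<omega>))
                       (borel \<Otimes>\<^sub>M PiM UNIV (\<lambda>_. borel)) (\<lambda>\<omega>. (Z 2 \<omega>, B 2 \<omega>))"
    by (rule indep_vars_indep_var) auto
  then have indep: "indep_var borel (particle_map t \<circ> (\<lambda>\<omega>. (Z 1 \<omega>, B 1 \<omega>)))
                              borel ((\<lambda>z. - particle_map t z) \<circ> (\<lambda>\<omega>. (Z 2 \<omega>, B 2 \<omega>)))"
    by (rule indep_var_compose) measurable
  have path_eq: "particle (Z i) (B i) t \<omega> = particle_map t (Z i \<omega>, B i \<omega>)"
    if "\<omega> \<in> space M" "1 \<le> i" for \<omega> i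
    using ps that \<open>0 \<le> t\<close> by (intro particle_eq_particle_map std_BM_continuous_on) (auto simp: particle_system_def)
  obtain h1 where "distributed M lborel (particle (Z 1) (B 1) t) h1" and "\<forall>z. h1 z \<le> ennreal \<Gamma>"
    using particle_system_density[OF ps \<open>0 \<le> t\<close>, of 1] by auto
  then have "distributed M lborel (particle_map t \<circ> (\<lambda>\<omega>. (Z 1 \<omega>, B 1 \<omega>))) h1"
    by (auto elim!: distributed_cong_space simp: path_eq)
  moreover have "random_variable borel ((\<lambda>z. - particle_map t z) \<circ> (\<lambda>\<omega>. (Z 2 \<omega>, B 2 \<omega>)))"
    using indep by (simp add: indep_var_eq)
  ultimately obtain h where h: "distributed M lborel (\<lambda>\<omega>. particle_map t (Z 1 \<omega>, B 1 \<omega>) - particle_map t (Z 2 \<omega>, B 2 \<omega>)) h"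
    and h_le: "\<forall>z. h z \<le> ennreal \<Gamma>"
    using distributed_add_indep_le[OF _ _ _ indep] \<open>\<forall>z. h1 z \<le> ennreal \<Gamma>\<close> by (fastforce simp: comp_def)
  have h_fin: "h z \<noteq> \<infinity>" for z
    using h_le[rule_format, of z] by (auto simp: top_unique)
  have "0 \<le> \<Gamma>"
    using ps admissible_f0_nonneg by (auto simp: particle_system_def)
  show ?thesis
  proof (intro exI conjI allI)
    show "distributed M lborel (\<lambda>\<omega>. particle (Z 1) (B 1) t \<omega> - particle (Z 2) (B 2) t \<omega>)
      (\<lambda>z. ennreal (enn2real (h z)))"
      using h h_fin by (auto intro!: distributed_enn2real elim!: distributed_cong_space simp: path_eq)
    show "0 \<le> enn2real (h z)" "enn2real (h z) \<le> \<Gamma>" for z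
      using enn2real_leI[OF \<open>0 \<le> \<Gamma>\<close> h_le[rule_format]] by simp_all
  qed
qed

lemma std_BM_cball_tail_le:
  fixes B :: "'a \<Rightarrow> real \<Rightarrow> real^'d"
  assumes bm: "std_BM M B" and t: "0 \<le> t" "t \<le> T" and "0 \<le> \<Gamma>" "0 \<le> R"
    and C: "1 + \<Gamma> * (unit_ball_vol (real CARD('d)) * R ^ CARD('d)) + 2 * R + 16 * T
              + 16 * real CARD('d) * (1 + T) \<le> C"
    and "C \<le> norm v"
  shows "ennreal \<Gamma> * emeasure M {\<omega>\<in>space M. norm (v - B \<omega> t) \<le> R} \<le> ennreal (C * exp (- norm v / C))"
proof (cases "t = 0")
  case True
  have "0 \<le> \<Gamma> * (unit_ball_vol (real CARD('d)) * R ^ CARD('d))" "0 \<le> 16 * real CARD('d) * (1 + T)"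
    using assms by simp_all
  then have "R < norm v"
    using C \<open>C \<le> norm v\<close> \<open>0 \<le> R\<close> t by linarith
  then have "{\<omega>\<in>space M. norm (v - B \<omega> t) \<le> R} = {}"
    using bm True by (auto simp: std_BM_def)
  then have "emeasure M {\<omega>\<in>space M. norm (v - B \<omega> t) \<le> R} = 0"
    by (simp only: emeasure_empty)
  then show ?thesis
    by simp
next
  case False
  with t have "0 < t" "0 < T"
    by simp_all
  define V where "V = unit_ball_vol (real CARD('d)) * R ^ CARD('d)"
  have "0 \<le> V"
    using \<open>0 \<le> R\<close> by (simp add: V_def)
  note bounds = tail_constant_bounds[OF \<open>0 \<le> \<Gamma>\<close> \<open>0 \<le> V\<close> \<open>0 \<le> R\<close> \<open>0 < T\<close> of_nat_0_le_iff
      C[folded V_def] \<open>C \<le> norm v\<close>]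
  have "emeasure M {\<omega>\<in>space M. norm (v - B \<omega> t) \<le> R} \<le> ennreal (exp (- (norm v - R)\<^sup>2 / (4 * T)) * V)"
    unfolding V_def
    by (rule emeasure_cball_gaussian_le[OF std_BM_distributed[OF bm \<open>0 < t\<close>] \<open>0 < t\<close> t(2) \<open>0 \<le> R\<close> bounds(1,2)])
  then have "ennreal \<Gamma> * emeasure M {\<omega>\<in>space M. norm (v - B \<omega> t) \<le> R}
      \<le> ennreal (\<Gamma> * (exp (- (norm v - R)\<^sup>2 / (4 * T)) * V))"
    using \<open>0 \<le> \<Gamma>\<close> \<open>0 \<le> V\<close> by (simp add: ennreal_mult mult_left_mono)
  also have "\<dots> \<le> ennreal (C * exp (- norm v / C))"
    using bounds(3) by (rule ennreal_leI)
  finally show ?thesis .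
qed

lemma particle_system_velocity_density:
  fixes Z :: "nat \<Rightarrow> 'a \<Rightarrow> (real^'d) \<times> (real^'d)"
  assumes ps: "particle_system M R \<Gamma> f0 Z B" and t: "t \<in> {0..T}"
    and C: "1 + \<bar>\<Gamma>\<bar> * (unit_ball_vol (real CARD('d)) * \<bar>R\<bar> ^ CARD('d)) + 2 * \<bar>R\<bar> + 16 * \<bar>T\<bar>
              + 16 * real CARD('d) * (1 + \<bar>T\<bar>) \<le> C"
  shows "\<exists>p. distributed M lborel (particle (Z 1) (B 1) t) (\<lambda>z. ennreal (p z)) \<and>
           (\<forall>x v. 0 \<le> p (x, v) \<and> p (x, v) \<le> (if norm v \<ge> C then C * exp (- norm v / C) else \<Gamma>))"
proof -
  have "0 \<le> t" "t \<le> T" "0 \<le> \<Gamma>" "0 \<le> R" "std_BM M (B 1)"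
    using t ps admissible_f0_nonneg by (auto simp: particle_system_def)
  then have C': "1 + \<Gamma> * (unit_ball_vol (real CARD('d)) * R ^ CARD('d)) + 2 * R + 16 * T
              + 16 * real CARD('d) * (1 + T) \<le> C"
    using C by simp
  have "0 \<le> \<bar>\<Gamma>\<bar> * (unit_ball_vol (real CARD('d)) * \<bar>R\<bar> ^ CARD('d))" "0 \<le> 16 * real CARD('d) * (1 + \<bar>T\<bar>)"
    by simp_all
  then have "1 \<le> C"
    using C by linarith
  obtain h where h: "distributed M lborel (particle (Z 1) (B 1) t) h" and h_le: "\<And>z. h z \<le> ennreal \<Gamma>"
    and h_tail: "\<And>x v. h (x, v) \<le> ennreal \<Gamma> * emeasure M {\<omega>\<in>space M. norm (v - B 1 \<omega> t) \<le> R}"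
    using particle_system_density[OF ps \<open>0 \<le> t\<close>, of 1] by auto
  have h_fin: "h z \<noteq> \<infinity>" for z
    using h_le[of z] by (auto simp: top_unique)
  show ?thesis
  proof (intro exI conjI allI)
    show "distributed M lborel (particle (Z 1) (B 1) t) (\<lambda>z. ennreal (enn2real (h z)))"
      using h h_fin by (rule distributed_enn2real)
    fix x v
    show "0 \<le> enn2real (h (x, v))"
      by simp
    have "C \<le> norm v \<Longrightarrow> h (x, v) \<le> ennreal (C * exp (- norm v / C))"
      using h_tail[of x v] std_BM_cball_tail_le[OF \<open>std_BM M (B 1)\<close> \<open>0 \<le> t\<close> \<open>t \<le> T\<close> \<open>0 \<le> \<Gamma>\<close> \<open>0 \<le> R\<close> C']
      by (blast intro: order_trans)
    then show "enn2real (h (x, v)) \<le> (if norm v \<ge> C then C * exp (- norm v / C) else \<Gamma>)"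
      using \<open>1 \<le> C\<close> \<open>0 \<le> \<Gamma>\<close> h_le[of "(x, v)"] by (auto intro: enn2real_leI)
  qed
qed

theorem lemma5p1:
  fixes R \<Gamma> T :: real
  shows
   "(\<forall>(M::'a measure) f0 (Z::nat \<Rightarrow> 'a \<Rightarrow> (real^'d) \<times> (real^'d)) B.
       particle_system M R \<Gamma> f0 Z B \<longrightarrow>
       (\<forall>t\<ge>0. \<exists>g. distributed M lborel (\<lambda>\<omega>. particle (Z 1) (B 1) t \<omega> - particle (Z 2) (B 2) t \<omega>)
                     (\<lambda>z. ennreal (g z)) \<and> (\<forall>z. 0 \<le> g z \<and> g z \<le> \<Gamma>))) \<and>
    (\<exists>C::real. 0 < C \<and>
       (\<forall>(M::'a measure) f0 (Z::nat \<Rightarrow> 'a \<Rightarrow> (real^'d) \<times> (real^'d)) B.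
         particle_system M R \<Gamma> f0 Z B \<longrightarrow>
         (\<forall>t\<in>{0..T}. \<exists>p. distributed M lborel (particle (Z 1) (B 1) t) (\<lambda>z. ennreal (p z)) \<and>
            (\<forall>x v. 0 \<le> p (x, v) \<and>
               p (x, v) \<le> (if norm v \<ge> C then C * exp (- norm v / C) else \<Gamma>)))))"
proof -
  define C where "C = 1 + \<bar>\<Gamma>\<bar> * (unit_ball_vol (real CARD('d)) * \<bar>R\<bar> ^ CARD('d)) + 2 * \<bar>R\<bar>
    + 16 * \<bar>T\<bar> + 16 * real CARD('d) * (1 + \<bar>T\<bar>)"
  have "0 < C"
    unfolding C_def by (simp add: add_pos_nonneg)
  then show ?thesis
    using particle_system_difference_density particle_system_velocity_density[OF _ _ C_def[symmetric, THEN eq_refl]]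
    by blast
qed

end
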